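(* Let $I$ be a finite set. The linear map from the span of posets on $I$ to $\mathbb Z[t]$ given by $$\Phi(P)=\sum_{(S_1|\cdots|S_k)\in\Sigma_P^T}\ \prod_{i=1}^k(|S_i|-1)!\ t^k$$ is a strong valuation on poset cones: it factors as $P\mapsto\Psi(\mathbb 1_{\operatorname{cone}(P)})$ for a linear map $\Psi$ on the span of indicator functions of poset cones on $I$.
   Context: For a poset $P$ on $I$, $\Sigma_P^T$ is the set of transversal ordered set partitions of $P$: ordered set partitions $S_1|\cdots|S_k$ of $I$ into nonempty blocks such that, for each $i$, the restriction $P|_{S_i}$ is an antichain and $S_i$ is a lower ideal (down-closed subset) of $P|_{S_i\sqcup\cdots\sqcup S_k}$. $\operatorname{cone}(P)=\operatorname{cone}\{e_i-e_j:i\ge_P j\}\subseteq\mathbb R^I$. *)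

theory Defs
  imports "HOL-Analysis.Analysis" "HOL-Computational_Algebra.Polynomial"
begin

text \<open>A poset on I is a relation P with partial_order_on I P; (j,i) in P means j <=_P i.
  Vectors in R^I are functions 'a => real (all poset cones have support in I).\<close>

definition std_basis :: "'a \<Rightarrow> 'a \<Rightarrow> real" where
  "std_basis i = (\<lambda>k. if k = i then 1 else 0)"

definition poset_cone :: "('a \<times> 'a) set \<Rightarrow> ('a \<Rightarrow> real) set" where
  "poset_cone P = {x. \<exists>c :: 'a \<times> 'a \<Rightarrow> real. (\<forall>p\<in>P. c p \<ge> 0) \<and>
      x = (\<lambda>k. \<Sum>(j,i)\<in>P. c (j,i) * (std_basis i k - std_basis j k))}"

definition transversal_osp :: "'a set \<Rightarrow> ('a \<times> 'a) set \<Rightarrow> 'a set list set" where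
  "transversal_osp I P = {Ss.
      (\<forall>S\<in>set Ss. S \<noteq> {}) \<and>
      (\<forall>a<length Ss. \<forall>b<length Ss. a \<noteq> b \<longrightarrow> Ss ! a \<inter> Ss ! b = {}) \<and>
      \<Union>(set Ss) = I \<and>
      (\<forall>a<length Ss. \<forall>x\<in>Ss ! a. \<forall>y\<in>Ss ! a. (x, y) \<in> P \<longrightarrow> x = y) \<and>
      (\<forall>a<length Ss. \<forall>x\<in>Ss ! a. \<forall>y\<in>\<Union>(set (drop a Ss)). (y, x) \<in> P \<longrightarrow> y \<in> Ss ! a)}"

definition Phi :: "'a set \<Rightarrow> ('a \<times> 'a) set \<Rightarrow> int poly" where
  "Phi I P = (\<Sum>Ss\<in>transversal_osp I P.
      monom (\<Prod>S\<leftarrow>Ss. fact (card S - 1)) (length Ss))"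

definition poset_cone_span :: "'a set \<Rightarrow> (('a \<Rightarrow> real) \<Rightarrow> int) set" where
  "poset_cone_span I = {f. \<exists>Ps c. finite Ps \<and> (\<forall>P\<in>Ps. partial_order_on I P) \<and>
      f = (\<lambda>x. \<Sum>P\<in>Ps. c P * indicator (poset_cone P) x)}"

end

(*
  Phi(P) is a combination, over the ordered set partitions rho of I, of the coefficients
  [rho is transversal for P], so it suffices to realise each such coefficient as a linear
  functional of the indicator function of cone(P).

  Call rho weakly transversal for P if every block is a lower set of the union of the later
  blocks. With y the vector of block indices of rho, the compact convex set
  cone(P) \<inter> {x. <y,x> = -1, |x_k| \<le> 1} is empty exactly when rho is weakly transversal, and
  emptiness of compact convex sets is detected linearly by the Euler characteristic, computed
  as iterated sums of right jumps along the coordinates. The antichain condition on the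
  blocks is then recovered from the weak condition by Moebius inversion over the ordered set
  partitions of each block: for a finite poset S the signed count of its weakly transversal
  ordered set partitions is (-1)^|S| if S is an antichain and 0 otherwise.
*)

theory Submission
  imports Defs
begin

section \<open>Euler characteristic by iterated jump sums\<close>

definition supported_on :: "'a set \<Rightarrow> ('a \<Rightarrow> real) set" where
  "supported_on A = {x. \<forall>k. k \<notin> A \<longrightarrow> x k = 0}"

text \<open>Convexity is stated coordinatewise, since \<^typ>\<open>'a \<Rightarrow> real\<close> is not a
  \<^class>\<open>real_vector\<close> instance.\<close>

definition coord_convex :: "('a \<Rightarrow> real) set \<Rightarrow> bool" where
  "coord_convex K \<longleftrightarrow>
     (\<forall>x\<in>K. \<forall>y\<in>K. \<forall>u::real. 0 \<le> u \<and> u \<le> 1 \<longrightarrow> (\<lambda>k. (1 - u) * x k + u * y k) \<in> K)"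

definition jump_sum :: "(real \<Rightarrow> int) \<Rightarrow> int" where
  "jump_sum \<phi> = (\<Sum>t \<in> {t. \<phi> t \<noteq> Lim (at_right t) \<phi>}. \<phi> t - Lim (at_right t) \<phi>)"

text \<open>Hadwiger's recursive Euler characteristic, for sets supported on the coordinates in \<open>l\<close>.\<close>

primrec euler_char :: "'a list \<Rightarrow> (('a \<Rightarrow> real) \<Rightarrow> int) \<Rightarrow> int" where
  "euler_char [] g = g (\<lambda>_. 0)"
| "euler_char (a # l) g = jump_sum (\<lambda>t. euler_char l (\<lambda>x. g (x(a := t))))"

lemma eventually_at_right_indicator_atLeastAtMost:
  fixes lo hi :: real
  shows "\<forall>\<^sub>F s in at_right t. indicator {lo..hi} s = (indicator {lo..<hi} t :: int)"
proof -
  consider "t < lo" | "lo \<le> t" "t < hi" | "hi \<le> t" by linarith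
  then show ?thesis
  proof cases
    case 1
    show ?thesis
      by (rule eventually_mono[OF eventually_at_right_real[OF 1]]) (use 1 in \<open>auto simp: indicator_def\<close>)
  next
    case 2
    show ?thesis
      by (rule eventually_mono[OF eventually_at_right_real[OF 2(2)]]) (use 2 in \<open>auto simp: indicator_def\<close>)
  next
    case 3
    show ?thesis
      by (rule eventually_mono[OF eventually_at_right_less]) (use 3 in \<open>auto simp: indicator_def\<close>)
  qed
qed

lemma jump_sum_interval_comb:
  fixes lo hi :: "'i \<Rightarrow> real"
  assumes "finite F"
  shows "jump_sum (\<lambda>t. \<Sum>i\<in>F. c i * indicator {lo i..hi i} t) = (\<Sum>i\<in>F. if lo i \<le> hi i then c i else 0)"
proof -
  define \<phi> where "\<phi> t = (\<Sum>i\<in>F. c i * indicator {lo i..hi i} t)" for t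
  have lim: "Lim (at_right t) \<phi> = (\<Sum>i\<in>F. c i * indicator {lo i..<hi i} t)" for t
  proof (rule tendsto_Lim[OF trivial_limit_at_right_real], rule tendsto_eventually)
    have "\<forall>\<^sub>F s in at_right t. \<forall>i\<in>F. indicator {lo i..hi i} s = (indicator {lo i..<hi i} t :: int)"
      by (rule eventually_ball_finite[OF assms]) (simp add: eventually_at_right_indicator_atLeastAtMost)
    then show "\<forall>\<^sub>F s in at_right t. \<phi> s = (\<Sum>i\<in>F. c i * indicator {lo i..<hi i} t)"
      by eventually_elim (simp add: \<phi>_def)
  qed
  have jump: "\<phi> t - Lim (at_right t) \<phi> = (\<Sum>i\<in>F. if lo i \<le> hi i \<and> t = hi i then c i else 0)" for t
  proof -
    have "\<phi> t - Lim (at_right t) \<phi> = (\<Sum>i\<in>F. c i * (indicator {lo i..hi i} t - indicator {lo i..<hi i} t))"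
      unfolding lim \<phi>_def by (simp add: right_diff_distrib sum_subtractf)
    also have "\<dots> = (\<Sum>i\<in>F. if lo i \<le> hi i \<and> t = hi i then c i else 0)"
      by (intro sum.cong) (auto simp: indicator_def)
    finally show ?thesis .
  qed
  have "jump_sum \<phi> = (\<Sum>t\<in>hi ` F. \<phi> t - Lim (at_right t) \<phi>)"
    unfolding jump_sum_def
  proof (rule sum.mono_neutral_left)
    show "{t. \<phi> t \<noteq> Lim (at_right t) \<phi>} \<subseteq> hi ` F"
    proof
      fix t assume "t \<in> {t. \<phi> t \<noteq> Lim (at_right t) \<phi>}"
      then have "(\<Sum>i\<in>F. if lo i \<le> hi i \<and> t = hi i then c i else 0) \<noteq> 0"
        unfolding jump[symmetric] by simp
      then obtain i where "i \<in> F" "(if lo i \<le> hi i \<and> t = hi i then c i else 0) \<noteq> 0"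
        by (rule sum.not_neutral_contains_not_neutral)
      then show "t \<in> hi ` F" by (auto split: if_splits)
    qed
  qed (use assms in auto)
  also have "\<dots> = (\<Sum>i\<in>F. \<Sum>t\<in>hi ` F. if lo i \<le> hi i \<and> t = hi i then c i else 0)"
    unfolding jump by (rule sum.swap)
  also have "\<dots> = (\<Sum>i\<in>F. if lo i \<le> hi i then c i else 0)"
    using assms by (intro sum.cong) (auto simp: sum.delta)
  finally show ?thesis by (simp only: \<phi>_def[abs_def])
qed

lemma slice_supported_on:
  assumes "a \<notin> L"
  shows "{x. x(a := t) \<in> K} \<inter> supported_on L
    = (\<lambda>z. z(a := 0)) ` (K \<inter> supported_on (insert a L) \<inter> {z. z a = t})"
proof (intro equalityI subsetI)
  fix x assume x: "x \<in> {x. x(a := t) \<in> K} \<inter> supported_on L"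
  then have "x = (x(a := t))(a := 0)"
    using assms by (auto simp: supported_on_def)
  moreover have "x(a := t) \<in> K \<inter> supported_on (insert a L) \<inter> {z. z a = t}"
    using x by (auto simp: supported_on_def)
  ultimately show "x \<in> (\<lambda>z. z(a := 0)) ` (K \<inter> supported_on (insert a L) \<inter> {z. z a = t})"
    by blast
qed (auto simp: supported_on_def fun_upd_idem)

lemma compact_slice:
  assumes "a \<notin> L" "compact (K \<inter> supported_on (insert a L))"
  shows "compact ({x. x(a := t) \<in> K} \<inter> supported_on L)"
proof -
  have "closed {z :: 'a \<Rightarrow> real. z a = t}"
    by (intro closed_Collect_eq continuous_intros) (auto intro: continuous_on_product_coordinates)
  with assms(2) have "compact (K \<inter> supported_on (insert a L) \<inter> {z. z a = t})"
    by (rule compact_Int_closed)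
  moreover have "continuous_on UNIV (\<lambda>z :: 'a \<Rightarrow> real. z(a := 0))"
  proof (rule continuous_on_coordinatewise_then_product)
    fix k show "continuous_on UNIV (\<lambda>z :: 'a \<Rightarrow> real. (z(a := 0)) k)"
      by (cases "k = a") (auto intro: continuous_on_product_coordinates)
  qed
  ultimately show ?thesis
    unfolding slice_supported_on[OF assms(1)] by (metis compact_continuous_image continuous_on_subset top_greatest)
qed

lemma coord_convex_slice:
  assumes "coord_convex (K \<inter> supported_on (insert a L))"
  shows "coord_convex ({x. x(a := t) \<in> K} \<inter> supported_on L)"
  unfolding coord_convex_def
proof (intro ballI allI impI)
  fix x y u assume x: "x \<in> {x. x(a := t) \<in> K} \<inter> supported_on L"
    and y: "y \<in> {x. x(a := t) \<in> K} \<inter> supported_on L" and u: "0 \<le> (u::real) \<and> u \<le> 1"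
  have "x(a := t) \<in> K \<inter> supported_on (insert a L)" "y(a := t) \<in> K \<inter> supported_on (insert a L)"
    using x y by (auto simp: supported_on_def)
  then have "(\<lambda>k. (1 - u) * (x(a := t)) k + u * (y(a := t)) k) \<in> K \<inter> supported_on (insert a L)"
    using assms u unfolding coord_convex_def by blast
  moreover have "(\<lambda>k. (1 - u) * (x(a := t)) k + u * (y(a := t)) k) = (\<lambda>k. (1 - u) * x k + u * y k)(a := t)"
    by (auto simp: algebra_simps)
  ultimately show "(\<lambda>k. (1 - u) * x k + u * y k) \<in> {x. x(a := t) \<in> K} \<inter> supported_on L"
    using x y by (auto simp: supported_on_def)
qed

lemma coordinate_image_interval:
  assumes "compact K" "coord_convex K"
  shows "\<exists>lo hi. (\<lambda>z. z a) ` K = {lo..hi}"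
proof -
  have "compact ((\<lambda>z. z a) ` K)"
    using assms(1) by (rule compact_continuous_image[rotated])
      (auto intro: continuous_on_subset[OF continuous_on_product_coordinates])
  moreover have "convex ((\<lambda>z. z a) ` K)"
    unfolding convex_alt
  proof (intro ballI allI impI)
    fix s t u assume "s \<in> (\<lambda>z. z a) ` K" "t \<in> (\<lambda>z. z a) ` K" "0 \<le> (u::real) \<and> u \<le> 1"
    then show "(1 - u) *\<^sub>R s + u *\<^sub>R t \<in> (\<lambda>z. z a) ` K"
      using assms(2) unfolding coord_convex_def by force
  qed
  ultimately show ?thesis
    using connected_compact_interval_1 convex_connected by blast
qed

lemma euler_char_comb:
  assumes "distinct l" "finite F"
    and "\<And>i. i \<in> F \<Longrightarrow> compact (K i \<inter> supported_on (set l)) \<and> coord_convex (K i \<inter> supported_on (set l))"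
  shows "euler_char l (\<lambda>x. \<Sum>i\<in>F. c i * indicator (K i) x)
    = (\<Sum>i\<in>F. if K i \<inter> supported_on (set l) = {} then 0 else c i)"
  using assms
proof (induction l arbitrary: K)
  case Nil
  have "supported_on {} = {\<lambda>_. 0}"
    by (auto simp: supported_on_def)
  then have "K i \<inter> supported_on (set []) = {} \<longleftrightarrow> (\<lambda>_. 0) \<notin> K i" for i
    by auto
  then show ?case
    by (auto simp: indicator_def intro!: sum.cong)
next
  case (Cons a l)
  let ?L = "set l"
  have a: "a \<notin> ?L" "distinct l"
    using Cons.prems(1) by auto
  define slice where "slice i t = {x. x(a := t) \<in> K i}" for i t
  have "\<forall>i\<in>F. \<exists>lo hi. (\<lambda>z. z a) ` (K i \<inter> supported_on (insert a ?L)) = {lo..hi}"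
    using Cons.prems(3) by (auto intro: coordinate_image_interval)
  then obtain lo hi where lohi: "\<And>i. i \<in> F \<Longrightarrow> (\<lambda>z. z a) ` (K i \<inter> supported_on (insert a ?L)) = {lo i..hi i}"
    by metis
  have slice_empty: "slice i t \<inter> supported_on ?L = {} \<longleftrightarrow> t \<notin> {lo i..hi i}" if "i \<in> F" for i t
    unfolding slice_def slice_supported_on[OF a(1)] lohi[OF that, symmetric] by auto
  have "euler_char l (\<lambda>x. \<Sum>i\<in>F. c i * indicator (K i) (x(a := t)))
      = (\<Sum>i\<in>F. c i * indicator {lo i..hi i} t)" for t
  proof -
    have "euler_char l (\<lambda>x. \<Sum>i\<in>F. c i * indicator (K i) (x(a := t)))
        = euler_char l (\<lambda>x. \<Sum>i\<in>F. c i * indicator (slice i t) x)"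
      by (simp add: slice_def indicator_def)
    also have "\<dots> = (\<Sum>i\<in>F. if slice i t \<inter> supported_on ?L = {} then 0 else c i)"
      using Cons.prems(3) a Cons.prems(2)
      by (intro Cons.IH) (auto simp: slice_def intro: compact_slice coord_convex_slice)
    also have "\<dots> = (\<Sum>i\<in>F. c i * indicator {lo i..hi i} t)"
      using slice_empty by (intro sum.cong) (auto simp: indicator_def)
    finally show ?thesis .
  qed
  then have "euler_char (a # l) (\<lambda>x. \<Sum>i\<in>F. c i * indicator (K i) x)
      = jump_sum (\<lambda>t. \<Sum>i\<in>F. c i * indicator {lo i..hi i} t)"
    by simp
  also have "\<dots> = (\<Sum>i\<in>F. if lo i \<le> hi i then c i else 0)"
    using Cons.prems(2) by (rule jump_sum_interval_comb)
  also have "\<dots> = (\<Sum>i\<in>F. if K i \<inter> supported_on (set (a # l)) = {} then 0 else c i)"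
  proof (intro sum.cong refl)
    fix i assume "i \<in> F"
    then have "K i \<inter> supported_on (insert a ?L) = {} \<longleftrightarrow> \<not> lo i \<le> hi i"
      using lohi[of i] by (metis atLeastatMost_empty_iff image_is_empty)
    then show "(if lo i \<le> hi i then c i else 0) = (if K i \<inter> supported_on (set (a # l)) = {} then 0 else c i)"
      by simp
  qed
  finally show ?case .
qed

section \<open>Sections of poset cones\<close>

definition cone_point :: "('a \<times> 'a) set \<Rightarrow> ('a \<times> 'a \<Rightarrow> real) \<Rightarrow> 'a \<Rightarrow> real" where
  "cone_point P c = (\<lambda>k. \<Sum>(j, i)\<in>P. c (j, i) * (std_basis i k - std_basis j k))"

definition unit_cube :: "('a \<Rightarrow> real) set" where
  "unit_cube = {x. \<forall>k. \<bar>x k\<bar> \<le> 1}"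

definition hyperplane_box :: "'a set \<Rightarrow> ('a \<Rightarrow> real) \<Rightarrow> ('a \<Rightarrow> real) set" where
  "hyperplane_box I y = {x. (\<Sum>k\<in>I. y k * x k) = -1} \<inter> unit_cube"

lemma poset_cone_eq: "poset_cone P = {cone_point P c | c. \<forall>p\<in>P. 0 \<le> c p}"
  unfolding poset_cone_def cone_point_def by auto

lemma sum_mult_cone_point:
  assumes "finite I" "P \<subseteq> I \<times> I"
  shows "(\<Sum>k\<in>I. y k * cone_point P c k) = (\<Sum>(j, i)\<in>P. c (j, i) * (y i - y j))"
proof -
  have "(\<Sum>k\<in>I. y k * cone_point P c k)
      = (\<Sum>(j, i)\<in>P. c (j, i) * ((\<Sum>k\<in>I. y k * std_basis i k) - (\<Sum>k\<in>I. y k * std_basis j k)))"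
    unfolding cone_point_def sum_distrib_left
    by (subst sum.swap) (auto simp: case_prod_beta sum_distrib_left sum_subtractf algebra_simps intro!: sum.cong)
  also have "\<dots> = (\<Sum>(j, i)\<in>P. c (j, i) * (y i - y j))"
    using assms by (intro sum.cong) (auto simp: std_basis_def if_distrib sum.delta' cong: if_cong)
  finally show ?thesis .
qed

lemma poset_cone_subset_supported_on:
  assumes "P \<subseteq> I \<times> I"
  shows "poset_cone P \<subseteq> supported_on I"
  using assms by (force simp: poset_cone_eq cone_point_def supported_on_def std_basis_def intro!: sum.neutral)

lemma zero_in_poset_cone: "(\<lambda>_. 0) \<in> poset_cone P"
  unfolding poset_cone_eq cone_point_def by (auto intro!: exI[of _ "\<lambda>_. 0"])

lemma coord_convex_Int: "coord_convex A \<Longrightarrow> coord_convex B \<Longrightarrow> coord_convex (A \<inter> B)"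
  unfolding coord_convex_def by blast

lemma coord_convex_poset_cone: "coord_convex (poset_cone P)"
  unfolding coord_convex_def poset_cone_eq
proof clarify
  fix u :: real and c d :: "'a \<times> 'a \<Rightarrow> real"
  assume "0 \<le> u" "u \<le> 1" "\<forall>p\<in>P. 0 \<le> c p" "\<forall>p\<in>P. 0 \<le> d p"
  then have "\<forall>p\<in>P. 0 \<le> (1 - u) * c p + u * d p"
    by simp
  moreover have "(\<lambda>k. (1 - u) * cone_point P c k + u * cone_point P d k)
      = cone_point P (\<lambda>p. (1 - u) * c p + u * d p)"
    unfolding cone_point_def
    by (auto simp: sum_distrib_left case_prod_beta algebra_simps simp flip: sum.distrib intro!: sum.cong)
  ultimately show "\<exists>e. (\<lambda>k. (1 - u) * cone_point P c k + u * cone_point P d k) = cone_point P e \<and> (\<forall>p\<in>P. 0 \<le> e p)"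
    by blast
qed

lemma coord_convex_hyperplane_box: "coord_convex (hyperplane_box I y)"
  unfolding coord_convex_def
proof (intro ballI allI impI)
  fix x z :: "'a \<Rightarrow> real" and u :: real
  assume x: "x \<in> hyperplane_box I y" and z: "z \<in> hyperplane_box I y" and u: "0 \<le> u \<and> u \<le> 1"
  have "(\<Sum>k\<in>I. y k * ((1 - u) * x k + u * z k)) = (1 - u) * (\<Sum>k\<in>I. y k * x k) + u * (\<Sum>k\<in>I. y k * z k)"
    by (simp add: sum_distrib_left algebra_simps flip: sum.distrib)
  also have "\<dots> = -1"
    using x z by (simp add: hyperplane_box_def algebra_simps)
  finally have "(\<Sum>k\<in>I. y k * ((1 - u) * x k + u * z k)) = -1" .
  moreover have "\<bar>(1 - u) * x k + u * z k\<bar> \<le> 1" for k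
  proof -
    have "\<bar>(1 - u) * x k + u * z k\<bar> \<le> (1 - u) * \<bar>x k\<bar> + u * \<bar>z k\<bar>"
      using u by (metis abs_mult abs_of_nonneg abs_triangle_ineq diff_ge_0_iff_ge)
    also have "\<dots> \<le> (1 - u) * 1 + u * 1"
      using u x z by (intro add_mono mult_left_mono) (auto simp: hyperplane_box_def unit_cube_def)
    finally show ?thesis by simp
  qed
  ultimately show "(\<lambda>k. (1 - u) * x k + u * z k) \<in> hyperplane_box I y"
    by (simp add: hyperplane_box_def unit_cube_def)
qed

lemma cone_coefficient_le:
  fixes z :: "'a \<Rightarrow> real"
  assumes "finite I" "P \<subseteq> I \<times> I"
    and z: "\<And>j i. (j, i) \<in> P \<Longrightarrow> j \<noteq> i \<Longrightarrow> z j + 1 \<le> z i"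
    and c: "\<forall>q\<in>P. 0 \<le> c q" and "(j, i) \<in> P" "j \<noteq> i" and "cone_point P c \<in> unit_cube"
  shows "c (j, i) \<le> (\<Sum>k\<in>I. \<bar>z k\<bar>)"
proof -
  have fP: "finite P"
    using assms(1,2) finite_subset by blast
  have nonneg: "0 \<le> c q * (z (snd q) - z (fst q))" if "q \<in> P" for q
    using that c z[of "fst q" "snd q"] by (cases "fst q = snd q") auto
  have "c (j, i) \<le> c (j, i) * (z i - z j)"
    using z[OF assms(5,6)] c assms(5) mult_left_mono[of 1 "z i - z j" "c (j, i)"] by simp
  also have "\<dots> \<le> (\<Sum>q\<in>P. c q * (z (snd q) - z (fst q)))"
    using member_le_sum[of "(j, i)" P "\<lambda>q. c q * (z (snd q) - z (fst q))"] assms(5) nonneg fP by simp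
  also have "\<dots> = (\<Sum>k\<in>I. z k * cone_point P c k)"
    using sum_mult_cone_point[OF assms(1,2), of z c] by (simp add: case_prod_beta)
  also have "\<dots> \<le> (\<Sum>k\<in>I. \<bar>z k\<bar>)"
  proof (rule order_trans[OF sum_abs[THEN order_trans[OF abs_ge_self]]], rule sum_mono)
    fix k
    have "\<bar>cone_point P c k\<bar> \<le> 1"
      using assms(7) by (simp add: unit_cube_def)
    then show "\<bar>z k * cone_point P c k\<bar> \<le> \<bar>z k\<bar>"
      by (simp add: abs_mult mult_left_le)
  qed
  finally show ?thesis .
qed

lemma continuous_on_cone_point: "finite P \<Longrightarrow> continuous_on UNIV (cone_point P)"
  unfolding cone_point_def case_prod_beta
  by (intro continuous_on_coordinatewise_then_product continuous_intros)
    (auto intro: continuous_on_product_coordinates)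

lemma closed_unit_cube: "closed unit_cube"
  unfolding unit_cube_def
  by (intro closed_Collect_all closed_Collect_le continuous_intros)
    (auto intro: continuous_on_product_coordinates)

lemma poset_cone_Int_unit_cube_subset:
  fixes z :: "'a \<Rightarrow> real"
  assumes "finite I" "P \<subseteq> I \<times> I"
    and z: "\<And>j i. (j, i) \<in> P \<Longrightarrow> j \<noteq> i \<Longrightarrow> z j + 1 \<le> z i"
  shows "poset_cone P \<inter> unit_cube
    \<subseteq> cone_point P ` PiE UNIV (\<lambda>p. if p \<in> P \<and> fst p \<noteq> snd p then {0..\<Sum>k\<in>I. \<bar>z k\<bar>} else {0})"
proof
  fix x assume "x \<in> poset_cone P \<inter> unit_cube"
  then obtain c where c: "\<forall>p\<in>P. 0 \<le> c p" "x = cone_point P c" "x \<in> unit_cube"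
    unfolding poset_cone_eq by blast
  define c' where "c' p = (if p \<in> P \<and> fst p \<noteq> snd p then c p else 0)" for p
  have "x = cone_point P c'"
    unfolding c(2) cone_point_def by (intro ext sum.cong) (auto simp: c'_def)
  moreover have "c' \<in> PiE UNIV (\<lambda>p. if p \<in> P \<and> fst p \<noteq> snd p then {0..\<Sum>k\<in>I. \<bar>z k\<bar>} else {0})"
    using cone_coefficient_le[OF assms(1,2) z c(1) _ _ c(3)[unfolded c(2)]] c(1)
    by (auto simp: PiE_iff c'_def)
  ultimately show "x \<in> cone_point P ` PiE UNIV (\<lambda>p. if p \<in> P \<and> fst p \<noteq> snd p then {0..\<Sum>k\<in>I. \<bar>z k\<bar>} else {0})"
    by blast
qed

lemma compact_poset_cone_Int_unit_cube:
  fixes z :: "'a \<Rightarrow> real"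
  assumes "finite I" "P \<subseteq> I \<times> I"
    and z: "\<And>j i. (j, i) \<in> P \<Longrightarrow> j \<noteq> i \<Longrightarrow> z j + 1 \<le> z i"
  shows "compact (poset_cone P \<inter> unit_cube)"
proof -
  define B where "B = PiE UNIV (\<lambda>p. if p \<in> P \<and> fst p \<noteq> snd p then {0..\<Sum>k\<in>I. \<bar>z k\<bar>} else {0::real})"
  have fP: "finite P"
    using assms(1,2) finite_subset by blast
  have "cone_point P ` B \<subseteq> poset_cone P"
    unfolding poset_cone_eq B_def by (force simp: PiE_iff split: if_splits)
  then have "poset_cone P \<inter> unit_cube = cone_point P ` B \<inter> unit_cube"
    using poset_cone_Int_unit_cube_subset[of I P z, OF assms(1,2) z] by (auto simp: B_def)
  moreover have "compact B"
  proof -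
    have "compactin (product_topology (\<lambda>_. euclidean) UNIV) B"
      unfolding B_def compactin_PiE by auto
    then show ?thesis
      by (simp add: euclidean_product_topology)
  qed
  then have "compact (cone_point P ` B)"
    by (metis compact_continuous_image continuous_on_cone_point[OF fP] continuous_on_subset top_greatest)
  ultimately show ?thesis
    using compact_Int_closed[OF _ closed_unit_cube] by simp
qed

lemma card_down_set_less:
  assumes "finite I" "partial_order_on I P" "(j, i) \<in> P" "j \<noteq> i"
  shows "card {w\<in>I. (w, j) \<in> P} < card {w\<in>I. (w, i) \<in> P}"
proof (rule psubset_card_mono)
  have "i \<in> I" "(i, i) \<in> P" "i \<notin> {w\<in>I. (w, j) \<in> P}"
    using partial_order_onD[OF assms(2)] assms(3,4) by (auto simp: refl_on_def dest: antisymD)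
  moreover have "{w\<in>I. (w, j) \<in> P} \<subseteq> {w\<in>I. (w, i) \<in> P}"
    using partial_order_onD(2)[OF assms(2)] assms(3) by (auto dest: transD)
  ultimately show "{w\<in>I. (w, j) \<in> P} \<subset> {w\<in>I. (w, i) \<in> P}"
    by blast
qed (use assms(1) in simp)

lemma compact_poset_cone_Int_hyperplane_box:
  assumes "finite I" "partial_order_on I P"
  shows "compact (poset_cone P \<inter> hyperplane_box I y)"
proof -
  have "compact (poset_cone P \<inter> unit_cube)"
    using card_down_set_less[OF assms]
    by (intro compact_poset_cone_Int_unit_cube[OF assms(1) partial_order_onD(4)[OF assms(2)],
          of "\<lambda>k. real (card {w\<in>I. (w, k) \<in> P})"]) force
  moreover have "closed {x :: 'a \<Rightarrow> real. (\<Sum>k\<in>I. y k * x k) = -1}"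
    by (intro closed_Collect_eq continuous_intros) (auto intro: continuous_on_product_coordinates)
  ultimately have "compact (poset_cone P \<inter> unit_cube \<inter> {x. (\<Sum>k\<in>I. y k * x k) = -1})"
    by (rule compact_Int_closed)
  then show ?thesis
    by (simp add: hyperplane_box_def Int_ac)
qed

lemma poset_cone_mono:
  assumes "finite P" "Q \<subseteq> P"
  shows "poset_cone Q \<subseteq> poset_cone P"
proof
  fix x assume "x \<in> poset_cone Q"
  then obtain c where c: "\<forall>p\<in>Q. 0 \<le> c p" "x = cone_point Q c"
    unfolding poset_cone_eq by blast
  have "x = cone_point P (\<lambda>p. if p \<in> Q then c p else 0)"
    unfolding c(2) cone_point_def using assms by (intro ext sum.mono_neutral_cong_left) auto
  then show "x \<in> poset_cone P"
    unfolding poset_cone_eq using c(1) by auto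
qed

lemma poset_cone_Int_hyperplane_box_eq_empty:
  assumes "finite I" "P \<subseteq> I \<times> I"
  shows "poset_cone P \<inter> hyperplane_box I (\<lambda>k. real (v k)) = {} \<longleftrightarrow> (\<forall>(j, i)\<in>P. v j \<le> v i)"
proof
  assume mono: "\<forall>(j, i)\<in>P. v j \<le> v i"
  show "poset_cone P \<inter> hyperplane_box I (\<lambda>k. real (v k)) = {}"
  proof (rule ccontr)
    assume "poset_cone P \<inter> hyperplane_box I (\<lambda>k. real (v k)) \<noteq> {}"
    then obtain c where c: "\<forall>p\<in>P. 0 \<le> c p" "cone_point P c \<in> hyperplane_box I (\<lambda>k. real (v k))"
      unfolding poset_cone_eq by blast
    have "-1 = (\<Sum>(j, i)\<in>P. c (j, i) * (real (v i) - real (v j)))"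
      using c(2) sum_mult_cone_point[OF assms] by (simp add: hyperplane_box_def)
    also have "\<dots> \<ge> 0"
      using c(1) mono by (intro sum_nonneg) auto
    finally show False by simp
  qed
next
  assume empty: "poset_cone P \<inter> hyperplane_box I (\<lambda>k. real (v k)) = {}"
  show "\<forall>(j, i)\<in>P. v j \<le> v i"
  proof (rule ccontr)
    assume "\<not> (\<forall>(j, i)\<in>P. v j \<le> v i)"
    then obtain j i where ji: "(j, i) \<in> P" "v i < v j"
      by auto
    define r where "r = 1 / (real (v j) - real (v i))"
    have r: "0 < r" "r \<le> 1" "r * (real (v i) - real (v j)) = -1"
      using ji(2) by (auto simp: r_def field_simps)
    define x where "x = cone_point {(j, i)} (\<lambda>_. r)"
    have "x \<in> poset_cone {(j, i)}"
      using r(1) unfolding poset_cone_eq x_def by auto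
    then have "x \<in> poset_cone P"
      using poset_cone_mono[of P "{(j, i)}"] assms ji(1) finite_subset by blast
    moreover have "(\<Sum>k\<in>I. real (v k) * x k) = -1"
      unfolding x_def using sum_mult_cone_point[OF assms(1), of "{(j, i)}"] assms(2) ji(1) r(3) by auto
    moreover have "x \<in> unit_cube"
      using r by (auto simp: x_def cone_point_def unit_cube_def std_basis_def abs_mult)
    ultimately show False
      using empty by (auto simp: hyperplane_box_def)
  qed
qed

section \<open>Ordered set partitions\<close>

definition antichain :: "('a \<times> 'a) set \<Rightarrow> 'a set \<Rightarrow> bool" where
  "antichain P S \<longleftrightarrow> (\<forall>x\<in>S. \<forall>y\<in>S. (x, y) \<in> P \<longrightarrow> x = y)"

definition lower_wrt :: "('a \<times> 'a) set \<Rightarrow> 'a set \<Rightarrow> 'a set \<Rightarrow> bool" where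
  "lower_wrt P A B \<longleftrightarrow> (\<forall>x\<in>A. \<forall>y\<in>B. (y, x) \<notin> P)"

primrec osp :: "'a set \<Rightarrow> 'a set list \<Rightarrow> bool" where
  "osp A [] \<longleftrightarrow> A = {}"
| "osp A (S # Ss) \<longleftrightarrow> S \<noteq> {} \<and> S \<subseteq> A \<and> osp (A - S) Ss"

primrec weakly_transversal :: "('a \<times> 'a) set \<Rightarrow> 'a set list \<Rightarrow> bool" where
  "weakly_transversal P [] \<longleftrightarrow> True"
| "weakly_transversal P (S # Ss) \<longleftrightarrow> lower_wrt P S (\<Union>(set Ss)) \<and> weakly_transversal P Ss"

primrec transversal :: "('a \<times> 'a) set \<Rightarrow> 'a set list \<Rightarrow> bool" where
  "transversal P [] \<longleftrightarrow> True"
| "transversal P (S # Ss) \<longleftrightarrow> antichain P S \<and> lower_wrt P S (\<Union>(set Ss)) \<and> transversal P Ss"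

primrec block_index :: "'a set list \<Rightarrow> 'a \<Rightarrow> nat" where
  "block_index [] k = 0"
| "block_index (S # Ss) k = (if k \<in> S then 0 else Suc (block_index Ss k))"

lemma lower_wrt_Un_left: "lower_wrt P (A \<union> B) C \<longleftrightarrow> lower_wrt P A C \<and> lower_wrt P B C"
  by (auto simp: lower_wrt_def)

lemma lower_wrt_Un_right: "lower_wrt P A (B \<union> C) \<longleftrightarrow> lower_wrt P A B \<and> lower_wrt P A C"
  by (auto simp: lower_wrt_def)

lemma lower_wrt_empty [simp]: "lower_wrt P {} B" "lower_wrt P A {}"
  by (auto simp: lower_wrt_def)

lemma osp_Union: "osp A \<rho> \<Longrightarrow> \<Union>(set \<rho>) = A"
  by (induction \<rho> arbitrary: A) auto

lemma osp_empty_iff: "osp {} \<rho> \<longleftrightarrow> \<rho> = []"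
  by (cases \<rho>) auto

lemma osp_append: "osp A \<rho> \<Longrightarrow> osp B \<sigma> \<Longrightarrow> A \<inter> B = {} \<Longrightarrow> osp (A \<union> B) (\<rho> @ \<sigma>)"
proof (induction \<rho> arbitrary: A)
  case (Cons S \<rho>)
  then have "osp ((A - S) \<union> B) (\<rho> @ \<sigma>)"
    by auto
  moreover have "(A - S) \<union> B = (A \<union> B) - S"
    using Cons.prems by auto
  ultimately show ?case
    using Cons.prems by auto
qed simp

lemma osp_length_le: "finite A \<Longrightarrow> osp A \<rho> \<Longrightarrow> length \<rho> \<le> card A"
proof (induction \<rho> arbitrary: A)
  case (Cons S \<rho>)
  then have "length \<rho> \<le> card (A - S)" "card (A - S) < card A"
    by (auto intro: psubset_card_mono)
  then show ?case
    by simp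
qed simp

lemma finite_osp: "finite A \<Longrightarrow> finite {\<rho>. osp A \<rho>}"
  by (rule finite_subset[OF _ finite_lists_length_le[of "Pow A" "card A"]])
    (auto dest: osp_Union osp_length_le)

lemma sum_osp_nonempty:
  assumes "finite A" "A \<noteq> {}"
  shows "(\<Sum>\<rho> | osp A \<rho>. f \<rho>) = (\<Sum>D | D \<noteq> {} \<and> D \<subseteq> A. \<Sum>\<rho> | osp (A - D) \<rho>. f (D # \<rho>))"
proof -
  have "{\<rho>. osp A \<rho>} = (\<lambda>(D, \<rho>). D # \<rho>) ` (SIGMA D:{D. D \<noteq> {} \<and> D \<subseteq> A}. {\<rho>. osp (A - D) \<rho>})"
  proof (intro equalityI subsetI)
    fix \<rho> assume "\<rho> \<in> {\<rho>. osp A \<rho>}"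
    then show "\<rho> \<in> (\<lambda>(D, \<rho>). D # \<rho>) ` (SIGMA D:{D. D \<noteq> {} \<and> D \<subseteq> A}. {\<rho>. osp (A - D) \<rho>})"
      using assms(2) by (cases \<rho>) (auto intro!: image_eqI)
  qed auto
  moreover have "inj_on (\<lambda>(D, \<rho>). D # \<rho>) X" for X :: "('a set \<times> 'a set list) set"
    by (auto simp: inj_on_def)
  ultimately have "(\<Sum>\<rho> | osp A \<rho>. f \<rho>)
      = (\<Sum>(D, \<rho>)\<in>(SIGMA D:{D. D \<noteq> {} \<and> D \<subseteq> A}. {\<rho>. osp (A - D) \<rho>}). f (D # \<rho>))"
    by (simp only: sum.reindex) (simp add: case_prod_beta)
  also have "\<dots> = (\<Sum>D | D \<noteq> {} \<and> D \<subseteq> A. \<Sum>\<rho> | osp (A - D) \<rho>. f (D # \<rho>))"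
    using assms(1) by (intro sum.Sigma[symmetric]) (auto intro: finite_osp)
  finally show ?thesis .
qed

lemma weakly_transversal_append:
  "weakly_transversal P (\<rho> @ \<sigma>)
    \<longleftrightarrow> weakly_transversal P \<rho> \<and> weakly_transversal P \<sigma> \<and> lower_wrt P (\<Union>(set \<rho>)) (\<Union>(set \<sigma>))"
  by (induction \<rho>) (auto simp: lower_wrt_Un_left lower_wrt_Un_right)

lemma weakly_transversal_iff_block_index:
  "osp A \<rho> \<Longrightarrow> weakly_transversal P \<rho>
    \<longleftrightarrow> (\<forall>(j, i)\<in>P. j \<in> A \<longrightarrow> i \<in> A \<longrightarrow> block_index \<rho> j \<le> block_index \<rho> i)"
proof (induction \<rho> arbitrary: A)
  case (Cons S \<rho>)
  then have osp: "S \<subseteq> A" "osp (A - S) \<rho>"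
    by auto
  then have S: "S \<subseteq> A" "\<Union>(set \<rho>) = A - S"
    by (auto dest: osp_Union)
  note IH = Cons.IH[OF osp(2)]
  show ?case
  proof
    assume "weakly_transversal P (S # \<rho>)"
    then have "lower_wrt P S (A - S)" "weakly_transversal P \<rho>"
      using S by auto
    then show "\<forall>(j, i)\<in>P. j \<in> A \<longrightarrow> i \<in> A \<longrightarrow> block_index (S # \<rho>) j \<le> block_index (S # \<rho>) i"
      unfolding IH lower_wrt_def by fastforce
  next
    assume mono: "\<forall>(j, i)\<in>P. j \<in> A \<longrightarrow> i \<in> A \<longrightarrow> block_index (S # \<rho>) j \<le> block_index (S # \<rho>) i"
    then have "lower_wrt P S (A - S)"
      using S(1) unfolding lower_wrt_def by fastforce
    moreover have "weakly_transversal P \<rho>"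
      using mono unfolding IH by fastforce
    ultimately show "weakly_transversal P (S # \<rho>)"
      using S by simp
  qed
qed simp

lemma finite_has_maximal_rel:
  assumes "finite S" "S \<noteq> {}" "trans P" "antisym P"
  shows "\<exists>m\<in>S. \<forall>z\<in>S. (m, z) \<in> P \<longrightarrow> z = m"
proof -
  define h where "h m = card ({w\<in>S. (w, m) \<in> P} \<union> {m})" for m
  have "Max (h ` S) \<in> h ` S"
    using assms(1,2) by (intro Max_in) auto
  then obtain m where m: "m \<in> S" "h m = Max (h ` S)"
    by (auto simp: image_iff)
  have "z = m" if "z \<in> S" "(m, z) \<in> P" for z
  proof (rule ccontr)
    assume "z \<noteq> m"
    have "{w\<in>S. (w, m) \<in> P} \<union> {m} \<subseteq> {w\<in>S. (w, z) \<in> P} \<union> {z}"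
      using that m(1) assms(3) by (auto dest: transD)
    moreover have "z \<notin> {w\<in>S. (w, m) \<in> P} \<union> {m}"
      using that \<open>z \<noteq> m\<close> assms(4) by (auto dest: antisymD)
    ultimately have "h m < h z"
      unfolding h_def using assms(1) that(1) by (intro psubset_card_mono) auto
    moreover have "h z \<le> h m"
      using m(2) that(1) assms(1) by simp
    ultimately show False
      by simp
  qed
  then show ?thesis
    using m(1) by blast
qed

lemma lower_wrt_antichain_iff:
  assumes "D \<subseteq> S"
  shows "lower_wrt P D (S - D) \<and> antichain P (S - D) \<longleftrightarrow> {x\<in>S. \<exists>z\<in>S. z \<noteq> x \<and> (x, z) \<in> P} \<subseteq> D"
    (is "_ \<longleftrightarrow> ?N \<subseteq> D")
proof
  assume D: "lower_wrt P D (S - D) \<and> antichain P (S - D)"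
  show "?N \<subseteq> D"
  proof (intro subsetI, rule ccontr)
    fix x assume "x \<in> ?N" "x \<notin> D"
    then obtain z where x: "x \<in> S - D" "z \<in> S" "z \<noteq> x" "(x, z) \<in> P"
      by blast
    show False
    proof (cases "z \<in> D")
      case True
      then show False
        using D x unfolding lower_wrt_def by blast
    next
      case False
      then have "z \<in> S - D"
        using x by blast
      then show False
        using D x unfolding antichain_def by blast
    qed
  qed
next
  assume N: "?N \<subseteq> D"
  have "lower_wrt P D (S - D)"
    unfolding lower_wrt_def
  proof (intro ballI notI)
    fix x y assume "x \<in> D" "y \<in> S - D" "(y, x) \<in> P"
    then have "y \<in> ?N"
      using assms by (intro CollectI conjI bexI[of _ x]) auto
    then show False
      using N \<open>y \<in> S - D\<close> by blast
  qed
  moreover have "antichain P (S - D)"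
    unfolding antichain_def
  proof (intro ballI impI, rule ccontr)
    fix x y assume "x \<in> S - D" "y \<in> S - D" "(x, y) \<in> P" "x \<noteq> y"
    then have "x \<in> ?N"
      by (intro CollectI conjI bexI[of _ y]) auto
    then show False
      using N \<open>x \<in> S - D\<close> by blast
  qed
  ultimately show "lower_wrt P D (S - D) \<and> antichain P (S - D)" ..
qed

lemma sum_Pow_alternating:
  assumes "finite M" "M \<noteq> {}"
  shows "(\<Sum>E\<in>Pow M. (-1::int) ^ card E) = 0"
proof -
  have "(\<Prod>x\<in>M. (1::int) - 1) = (\<Sum>E\<in>Pow M. (-1) ^ card E * (\<Prod>x\<in>E. 1) * (\<Prod>x\<in>M - E. 1))"
    by (rule prod_diff_conv_sum[OF assms(1)])
  moreover have "(\<Prod>x\<in>M. (1::int) - 1) = 0"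
    using assms by (simp add: card_gt_0_iff)
  ultimately show ?thesis
    by simp
qed

lemma sum_nonempty_supersets_alternating:
  assumes "finite S" "N \<subseteq> S" "N \<noteq> S"
  shows "(\<Sum>D | D \<noteq> {} \<and> D \<subseteq> S. of_bool (N \<subseteq> D) * (-1::int) ^ card (S - D))
    = - of_bool (N = {}) * (-1) ^ card S"
proof -
  have "(\<Sum>D | D \<noteq> {} \<and> D \<subseteq> S. of_bool (N \<subseteq> D) * (-1::int) ^ card (S - D))
      = (\<Sum>D | D \<noteq> {} \<and> D \<subseteq> S. if N \<subseteq> D then (-1) ^ card (S - D) else 0)"
    by (intro sum.cong) auto
  also have "\<dots> = (\<Sum>D \<in> {D \<in> {D. D \<noteq> {} \<and> D \<subseteq> S}. N \<subseteq> D}. (-1) ^ card (S - D))"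
    using assms(1) by (intro sum.inter_filter[symmetric]) simp
  also have "{D \<in> {D. D \<noteq> {} \<and> D \<subseteq> S}. N \<subseteq> D} = {D. N \<subseteq> D \<and> D \<subseteq> S} - {{}}"
    by auto
  also have "(\<Sum>D \<in> {D. N \<subseteq> D \<and> D \<subseteq> S} - {{}}. (-1::int) ^ card (S - D))
      = (\<Sum>D | N \<subseteq> D \<and> D \<subseteq> S. (-1) ^ card (S - D)) - of_bool (N = {}) * (-1) ^ card S"
    using assms(1) by (simp add: sum_diff1)
  also have "(\<Sum>D | N \<subseteq> D \<and> D \<subseteq> S. (-1::int) ^ card (S - D)) = (\<Sum>E\<in>Pow (S - N). (-1) ^ card E)"
    by (rule sum.reindex_bij_witness[of _ "\<lambda>E. S - E" "\<lambda>D. S - D"]) (use assms in auto)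
  also have "\<dots> = 0"
    using assms by (intro sum_Pow_alternating) auto
  finally show ?thesis
    by simp
qed

lemma sum_osp_weakly_transversal:
  assumes "finite S" "trans P" "antisym P"
  shows "(\<Sum>\<rho> | osp S \<rho>. (-1::int) ^ length \<rho> * of_bool (weakly_transversal P \<rho>))
    = (-1) ^ card S * of_bool (antichain P S)"
  using assms(1)
proof (induction "card S" arbitrary: S rule: less_induct)
  case less
  show ?case
  proof (cases "S = {}")
    case True
    then have "{\<rho>. osp S \<rho>} = {[]}"
      by (auto simp: osp_empty_iff)
    then show ?thesis
      using True by (simp add: antichain_def)
  next
    case False
    define N where "N = {x\<in>S. \<exists>z\<in>S. z \<noteq> x \<and> (x, z) \<in> P}"
    obtain m where "m \<in> S" "m \<notin> N"
      using finite_has_maximal_rel[OF less.prems False assms(2,3)] by (auto simp: N_def)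
    then have N: "N \<subseteq> S" "N \<noteq> S"
      by (auto simp: N_def)
    have "(\<Sum>\<rho> | osp S \<rho>. (-1::int) ^ length \<rho> * of_bool (weakly_transversal P \<rho>))
        = (\<Sum>D | D \<noteq> {} \<and> D \<subseteq> S. - (of_bool (lower_wrt P D (S - D)) *
             (\<Sum>\<rho> | osp (S - D) \<rho>. (-1) ^ length \<rho> * of_bool (weakly_transversal P \<rho>))))"
      unfolding sum_osp_nonempty[OF less.prems False] sum_distrib_left sum_negf[symmetric]
      by (intro sum.cong refl) (simp add: osp_Union)
    also have "\<dots> = - (\<Sum>D | D \<noteq> {} \<and> D \<subseteq> S. of_bool (N \<subseteq> D) * (-1) ^ card (S - D))"
      unfolding sum_negf[symmetric]
    proof (intro sum.cong refl)
      fix D assume D: "D \<in> {D. D \<noteq> {} \<and> D \<subseteq> S}"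
      then have "card (S - D) < card S"
        using less.prems by (auto intro: psubset_card_mono)
      moreover have "lower_wrt P D (S - D) \<and> antichain P (S - D) \<longleftrightarrow> N \<subseteq> D"
        unfolding N_def using D by (intro lower_wrt_antichain_iff) simp
      ultimately show "- (of_bool (lower_wrt P D (S - D)) *
            (\<Sum>\<rho> | osp (S - D) \<rho>. (-1::int) ^ length \<rho> * of_bool (weakly_transversal P \<rho>)))
          = - (of_bool (N \<subseteq> D) * (-1) ^ card (S - D))"
        using less.hyps less.prems by auto
    qed
    also have "\<dots> = (-1) ^ card S * of_bool (antichain P S)"
    proof -
      have "N = {} \<longleftrightarrow> antichain P S"
        unfolding N_def antichain_def by auto
      then show ?thesis
        using sum_nonempty_supersets_alternating[OF less.prems N] by simp
    qed
    finally show ?thesis .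
  qed
qed

lemma transversal_osp_Cons:
  "S # Ss \<in> transversal_osp I P \<longleftrightarrow>
     S \<noteq> {} \<and> S \<subseteq> I \<and> antichain P S \<and> lower_wrt P S (\<Union>(set Ss)) \<and> Ss \<in> transversal_osp (I - S) P"
proof -
  have disjoint: "(\<forall>a<length (S # Ss). \<forall>b<length (S # Ss). a \<noteq> b \<longrightarrow> (S # Ss) ! a \<inter> (S # Ss) ! b = {})
      \<longleftrightarrow> S \<inter> \<Union>(set Ss) = {} \<and> (\<forall>a<length Ss. \<forall>b<length Ss. a \<noteq> b \<longrightarrow> Ss ! a \<inter> Ss ! b = {})"
    unfolding length_Cons All_less_Suc2 by (auto simp: set_conv_nth; blast)
  have antichains: "(\<forall>a<length (S # Ss). \<forall>x\<in>(S # Ss) ! a. \<forall>y\<in>(S # Ss) ! a. (x, y) \<in> P \<longrightarrow> x = y)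
      \<longleftrightarrow> antichain P S \<and> (\<forall>a<length Ss. \<forall>x\<in>Ss ! a. \<forall>y\<in>Ss ! a. (x, y) \<in> P \<longrightarrow> x = y)"
    unfolding length_Cons All_less_Suc2 antichain_def by simp
  have lower: "(\<forall>a<length (S # Ss). \<forall>x\<in>(S # Ss) ! a. \<forall>y\<in>\<Union>(set (drop a (S # Ss))). (y, x) \<in> P \<longrightarrow> y \<in> (S # Ss) ! a)
      \<longleftrightarrow> (\<forall>x\<in>S. \<forall>y\<in>S \<union> \<Union>(set Ss). (y, x) \<in> P \<longrightarrow> y \<in> S) \<and>
          (\<forall>a<length Ss. \<forall>x\<in>Ss ! a. \<forall>y\<in>\<Union>(set (drop a Ss)). (y, x) \<in> P \<longrightarrow> y \<in> Ss ! a)"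
    unfolding length_Cons All_less_Suc2 by simp
  define DD where "DD = (\<forall>a<length Ss. \<forall>b<length Ss. a \<noteq> b \<longrightarrow> Ss ! a \<inter> Ss ! b = {})"
  define A4 where "A4 = (\<forall>a<length Ss. \<forall>x\<in>Ss ! a. \<forall>y\<in>Ss ! a. (x, y) \<in> P \<longrightarrow> x = y)"
  define A5 where "A5 = (\<forall>a<length Ss. \<forall>x\<in>Ss ! a. \<forall>y\<in>\<Union>(set (drop a Ss)). (y, x) \<in> P \<longrightarrow> y \<in> Ss ! a)"
  define NE where "NE = (\<forall>T\<in>set Ss. T \<noteq> {})"
  define L where "L = (\<forall>x\<in>S. \<forall>y\<in>S \<union> \<Union>(set Ss). (y, x) \<in> P \<longrightarrow> y \<in> S)"
  have partition: "S \<inter> \<Union>(set Ss) = {} \<and> S \<union> \<Union>(set Ss) = I \<longleftrightarrow> S \<subseteq> I \<and> \<Union>(set Ss) = I - S"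
    by auto
  have "S \<inter> \<Union>(set Ss) = {} \<Longrightarrow> L \<longleftrightarrow> lower_wrt P S (\<Union>(set Ss))"
    by (auto simp: L_def lower_wrt_def)
  then show ?thesis
    unfolding transversal_osp_def mem_Collect_eq disjoint antichains lower
      DD_def[symmetric] A4_def[symmetric] A5_def[symmetric] L_def[symmetric]
    using partition by (simp add: NE_def[symmetric]) blast
qed

lemma transversal_osp_eq: "transversal_osp I P = {Ss. osp I Ss \<and> transversal P Ss}"
proof -
  have "Ss \<in> transversal_osp I P \<longleftrightarrow> osp I Ss \<and> transversal P Ss" for Ss
  proof (induction Ss arbitrary: I)
    case Nil
    then show ?case
      by (auto simp: transversal_osp_def)
  next
    case (Cons S Ss)
    then show ?case
      unfolding transversal_osp_Cons by (auto dest: osp_Union)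
  qed
  then show ?thesis
    by blast
qed

section \<open>The valuation\<close>

definition cone_comb :: "('a \<times> 'a) set set \<Rightarrow> (('a \<times> 'a) set \<Rightarrow> int) \<Rightarrow> ('a \<Rightarrow> real) \<Rightarrow> int" where
  "cone_comb Ps c = (\<lambda>x. \<Sum>P\<in>Ps. c P * indicator (poset_cone P) x)"

text \<open>On \<open>indicator (poset_cone P)\<close> this is \<open>1 - \<chi>(cone(P) \<inter> hyperplane_box)\<close>, i.e.
  the indicator of \<open>\<rho>\<close> being weakly transversal for \<open>P\<close>.\<close>

definition weak_test :: "'a set \<Rightarrow> 'a list \<Rightarrow> 'a set list \<Rightarrow> (('a \<Rightarrow> real) \<Rightarrow> int) \<Rightarrow> int" where
  "weak_test I l \<rho> f =
     f (\<lambda>_. 0) - euler_char l (\<lambda>x. f x * indicator (hyperplane_box I (\<lambda>k. real (block_index \<rho> k))) x)"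

lemma weak_test_cone_comb:
  assumes "finite I" "distinct l" "set l = I" "osp I \<rho>"
    and "finite Ps" "\<forall>P\<in>Ps. partial_order_on I P"
  shows "weak_test I l \<rho> (cone_comb Ps c) = (\<Sum>P\<in>Ps. c P * of_bool (weakly_transversal P \<rho>))"
proof -
  define A where "A = hyperplane_box I (\<lambda>k. real (block_index \<rho> k))"
  have PI: "P \<subseteq> I \<times> I" if "P \<in> Ps" for P
    using assms(6) that partial_order_onD(4) by blast
  have supp: "poset_cone P \<inter> A \<inter> supported_on (set l) = poset_cone P \<inter> A" if "P \<in> Ps" for P
    using poset_cone_subset_supported_on[OF PI[OF that]] assms(3) by blast
  have "euler_char l (\<lambda>x. cone_comb Ps c x * indicator A x)
      = euler_char l (\<lambda>x. \<Sum>P\<in>Ps. c P * indicator (poset_cone P \<inter> A) x)"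
    by (simp add: cone_comb_def sum_distrib_right indicator_inter_arith mult.assoc)
  also have "\<dots> = (\<Sum>P\<in>Ps. if poset_cone P \<inter> A \<inter> supported_on (set l) = {} then 0 else c P)"
    using assms(1,6) supp
    by (intro euler_char_comb[OF assms(2,5)])
      (auto simp: A_def compact_poset_cone_Int_hyperplane_box
        intro!: coord_convex_Int coord_convex_poset_cone coord_convex_hyperplane_box)
  also have "\<dots> = (\<Sum>P\<in>Ps. c P * of_bool (\<not> weakly_transversal P \<rho>))"
  proof (intro sum.cong refl)
    fix P assume "P \<in> Ps"
    then have PIP: "P \<subseteq> I \<times> I"
      by (rule PI)
    have "poset_cone P \<inter> A = {} \<longleftrightarrow> (\<forall>(j, i)\<in>P. block_index \<rho> j \<le> block_index \<rho> i)"
      unfolding A_def by (rule poset_cone_Int_hyperplane_box_eq_empty[OF assms(1) PIP])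
    also have "\<dots> \<longleftrightarrow> weakly_transversal P \<rho>"
      unfolding weakly_transversal_iff_block_index[OF assms(4)] using PIP by fastforce
    finally have "poset_cone P \<inter> A \<inter> supported_on (set l) = {} \<longleftrightarrow> weakly_transversal P \<rho>"
      unfolding supp[OF \<open>P \<in> Ps\<close>] .
    then show "(if poset_cone P \<inter> A \<inter> supported_on (set l) = {} then 0 else c P)
        = c P * of_bool (\<not> weakly_transversal P \<rho>)"
      by simp
  qed
  finally have "euler_char l (\<lambda>x. cone_comb Ps c x * indicator A x)
      = (\<Sum>P\<in>Ps. c P * of_bool (\<not> weakly_transversal P \<rho>))" .
  moreover have "cone_comb Ps c (\<lambda>_. 0) = (\<Sum>P\<in>Ps. c P)"
    by (simp add: cone_comb_def zero_in_poset_cone)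
  ultimately show ?thesis
    unfolding weak_test_def A_def[symmetric] by (simp flip: sum_subtractf) (intro sum.cong; simp)
qed

text \<open>Moebius inversion: expanding each remaining block \<open>S\<close> into its ordered set partitions
  \<open>\<pi>\<close> with sign \<open>(-1)^(|S| + |\<pi>|)\<close> turns the weak condition on \<open>S\<close> into the antichain
  condition.\<close>

primrec transversal_test ::
    "'a set \<Rightarrow> 'a list \<Rightarrow> 'a set list \<Rightarrow> 'a set list \<Rightarrow> (('a \<Rightarrow> real) \<Rightarrow> int) \<Rightarrow> int" where
  "transversal_test I l [] \<rho> f = weak_test I l \<rho> f"
| "transversal_test I l (S # Ss) \<rho> f =
     (\<Sum>\<pi> | osp S \<pi>. (-1) ^ (card S + length \<pi>) * transversal_test I l Ss (\<rho> @ \<pi>) f)"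

lemma transversal_test_cone_comb:
  assumes "finite I" "distinct l" "set l = I"
    and "finite Ps" "\<forall>P\<in>Ps. partial_order_on I P"
  shows "osp B \<rho> \<Longrightarrow> osp C \<tau> \<Longrightarrow> B \<inter> C = {} \<Longrightarrow> B \<union> C = I \<Longrightarrow>
    transversal_test I l \<tau> \<rho> (cone_comb Ps c)
      = (\<Sum>P\<in>Ps. c P * of_bool (weakly_transversal P \<rho> \<and> lower_wrt P B C \<and> transversal P \<tau>))"
proof (induction \<tau> arbitrary: \<rho> B C)
  case Nil
  then show ?case
    using weak_test_cone_comb[OF assms(1-3) _ assms(4,5)] by simp
next
  case (Cons S Ss)
  then have S: "S \<noteq> {}" "S \<subseteq> C" "osp (C - S) Ss"
    by auto
  then have "finite S"
    using Cons.prems(4) assms(1) finite_subset by blast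
  have UB: "\<Union>(set \<rho>) = B" and USs: "\<Union>(set Ss) = C - S"
    using osp_Union Cons.prems(1) S(3) by auto
  define R where "R P \<longleftrightarrow> weakly_transversal P \<rho> \<and> lower_wrt P B S \<and> lower_wrt P (B \<union> S) (C - S) \<and> transversal P Ss"
    for P
  have "transversal_test I l Ss (\<rho> @ \<pi>) (cone_comb Ps c)
      = (\<Sum>P\<in>Ps. c P * of_bool (R P) * of_bool (weakly_transversal P \<pi>))" if "osp S \<pi>" for \<pi>
  proof -
    have "osp (B \<union> S) (\<rho> @ \<pi>)" "(B \<union> S) \<inter> (C - S) = {}" "(B \<union> S) \<union> (C - S) = I"
      using osp_append[OF Cons.prems(1) that] Cons.prems(3,4) S(2) by auto
    moreover have "\<Union>(set \<pi>) = S"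
      using osp_Union[OF that] .
    ultimately show ?thesis
      using Cons.IH[OF _ S(3)] by (auto simp: R_def UB weakly_transversal_append intro!: sum.cong)
  qed
  then have "transversal_test I l (S # Ss) \<rho> (cone_comb Ps c)
      = (\<Sum>P\<in>Ps. c P * of_bool (R P) * (-1) ^ card S *
           (\<Sum>\<pi> | osp S \<pi>. (-1) ^ length \<pi> * of_bool (weakly_transversal P \<pi>)))"
    by (simp add: power_add sum_distrib_left sum_distrib_right mult_ac sum.swap[of _ "{\<pi>. osp S \<pi>}"])
  also have "\<dots> = (\<Sum>P\<in>Ps. c P * of_bool (R P \<and> antichain P S))"
  proof (intro sum.cong refl)
    fix P assume "P \<in> Ps"
    then have "partial_order_on I P"
      using assms(5) by blast
    then show "c P * of_bool (R P) * (-1) ^ card S *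
          (\<Sum>\<pi> | osp S \<pi>. (-1) ^ length \<pi> * of_bool (weakly_transversal P \<pi>))
        = c P * of_bool (R P \<and> antichain P S)"
      using sum_osp_weakly_transversal[OF \<open>finite S\<close> partial_order_onD(2,3)]
      by (simp flip: power_add)
  qed
  also have "\<dots> = (\<Sum>P\<in>Ps. c P * of_bool (weakly_transversal P \<rho> \<and> lower_wrt P B C \<and> transversal P (S # Ss)))"
  proof -
    have "C = S \<union> (C - S)"
      using S(2) by blast
    then have "lower_wrt P B C \<longleftrightarrow> lower_wrt P B S \<and> lower_wrt P B (C - S)" for P
      by (metis lower_wrt_Un_right)
    then show ?thesis
      by (auto simp: R_def USs lower_wrt_Un_left intro!: sum.cong)
  qed
  finally show ?case .
qed

lemma smult_sum_right: "smult a (\<Sum>i\<in>S. f i) = (\<Sum>i\<in>S. smult a (f i))"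
  by (induction S rule: infinite_finite_induct) (simp_all add: smult_add_right)

definition cone_valuation :: "'a set \<Rightarrow> 'a list \<Rightarrow> (('a \<Rightarrow> real) \<Rightarrow> int) \<Rightarrow> int poly" where
  "cone_valuation I l f =
     (\<Sum>Ss | osp I Ss. smult (transversal_test I l Ss [] f) (monom (\<Prod>S\<leftarrow>Ss. fact (card S - 1)) (length Ss)))"

lemma cone_valuation_cone_comb:
  assumes "finite I" "distinct l" "set l = I"
    and "finite Ps" "\<forall>P\<in>Ps. partial_order_on I P"
  shows "cone_valuation I l (cone_comb Ps c) = (\<Sum>P\<in>Ps. smult (c P) (Phi I P))"
proof -
  define m where "m Ss = (monom (\<Prod>S\<leftarrow>Ss. fact (card S - 1)) (length Ss) :: int poly)" for Ss :: "'a set list"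
  have "cone_valuation I l (cone_comb Ps c) = (\<Sum>Ss | osp I Ss. \<Sum>P\<in>Ps. smult (c P * of_bool (transversal P Ss)) (m Ss))"
    unfolding cone_valuation_def m_def[symmetric]
    using transversal_test_cone_comb[OF assms, of "{}" "[]" I _ c] by (intro sum.cong refl) (simp add: smult_sum)
  also have "\<dots> = (\<Sum>P\<in>Ps. smult (c P) (\<Sum>Ss | osp I Ss \<and> transversal P Ss. m Ss))"
  proof (subst sum.swap, intro sum.cong refl)
    fix P
    have "(\<Sum>Ss | osp I Ss. smult (c P * of_bool (transversal P Ss)) (m Ss))
        = (\<Sum>Ss | osp I Ss. if transversal P Ss then smult (c P) (m Ss) else 0)"
      by (intro sum.cong) auto
    also have "\<dots> = (\<Sum>Ss | osp I Ss \<and> transversal P Ss. smult (c P) (m Ss))"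
      using sum.inter_filter[OF finite_osp[OF assms(1)], of "\<lambda>Ss. smult (c P) (m Ss)" "transversal P"]
      by simp
    finally show "(\<Sum>Ss | osp I Ss. smult (c P * of_bool (transversal P Ss)) (m Ss))
        = smult (c P) (\<Sum>Ss | osp I Ss \<and> transversal P Ss. m Ss)"
      by (simp add: smult_sum_right)
  qed
  also have "\<dots> = (\<Sum>P\<in>Ps. smult (c P) (Phi I P))"
    by (simp add: Phi_def transversal_osp_eq m_def)
  finally show ?thesis .
qed

lemma cone_valuation_indicator:
  assumes "finite I" "distinct l" "set l = I" "partial_order_on I P"
  shows "cone_valuation I l (indicator (poset_cone P)) = Phi I P"
proof -
  have "indicator (poset_cone P) = cone_comb {P} (\<lambda>_. 1)"
    by (simp add: cone_comb_def)
  then show ?thesis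
    using cone_valuation_cone_comb[OF assms(1-3), of "{P}"] assms(4) by simp
qed

lemma cone_comb_add: "(\<lambda>x. cone_comb Ps c x + cone_comb Ps d x) = cone_comb Ps (\<lambda>P. c P + d P)"
  by (simp add: cone_comb_def sum.distrib algebra_simps)

lemma cone_comb_scale: "(\<lambda>x. n * cone_comb Ps c x) = cone_comb Ps (\<lambda>P. n * c P)"
  by (simp add: cone_comb_def sum_distrib_left mult.assoc)

lemma finite_partial_orders_on: "finite I \<Longrightarrow> finite {P. partial_order_on I P}"
  by (rule finite_subset[of _ "Pow (I \<times> I)"]) (use partial_order_onD(4) in auto)

lemma poset_cone_span_eq:
  assumes "finite I"
  shows "poset_cone_span I = range (cone_comb {P. partial_order_on I P})"
proof -
  let ?POs = "{P. partial_order_on I P}"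
  have span: "poset_cone_span I = {cone_comb Ps c | Ps c. finite Ps \<and> (\<forall>P\<in>Ps. partial_order_on I P)}"
    unfolding poset_cone_span_def cone_comb_def by blast
  have "cone_comb Ps c = cone_comb ?POs (\<lambda>P. if P \<in> Ps then c P else 0)"
    if "finite Ps" "\<forall>P\<in>Ps. partial_order_on I P" for Ps c
    unfolding cone_comb_def using finite_partial_orders_on[OF assms] that
    by (intro ext sum.mono_neutral_cong_left) auto
  then show ?thesis
    unfolding span using finite_partial_orders_on[OF assms] by blast
qed

theorem proposition8p12:
  fixes I :: "'a set"
  assumes "finite I"
  shows "\<exists>\<Psi> :: (('a \<Rightarrow> real) \<Rightarrow> int) \<Rightarrow> int poly.
    (\<forall>f\<in>poset_cone_span I. \<forall>g\<in>poset_cone_span I. \<Psi> (\<lambda>x. f x + g x) = \<Psi> f + \<Psi> g) \<and>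
    (\<forall>f\<in>poset_cone_span I. \<forall>n::int. \<Psi> (\<lambda>x. n * f x) = smult n (\<Psi> f)) \<and>
    (\<forall>P. partial_order_on I P \<longrightarrow> \<Psi> (indicator (poset_cone P)) = Phi I P)"
proof -
  obtain l where l: "distinct l" "set l = I"
    using finite_distinct_list[OF assms] by blast
  define POs where "POs = {P. partial_order_on I P}"
  have val: "cone_valuation I l (cone_comb POs c) = (\<Sum>P\<in>POs. smult (c P) (Phi I P))" for c
    using cone_valuation_cone_comb[OF assms l finite_partial_orders_on[OF assms]] by (simp add: POs_def)
  have span: "poset_cone_span I = range (cone_comb POs)"
    unfolding POs_def by (rule poset_cone_span_eq[OF assms])
  show ?thesis
  proof (intro exI[of _ "cone_valuation I l"] conjI ballI allI impI)
    fix f g assume "f \<in> poset_cone_span I" "g \<in> poset_cone_span I"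
    then show "cone_valuation I l (\<lambda>x. f x + g x) = cone_valuation I l f + cone_valuation I l g"
      unfolding span by (auto simp: cone_comb_add val smult_add_left sum.distrib)
  next
    fix f n assume "f \<in> poset_cone_span I"
    then show "cone_valuation I l (\<lambda>x. n * f x) = smult n (cone_valuation I l f)"
      unfolding span by (auto simp: cone_comb_scale val smult_sum_right)
  qed (use cone_valuation_indicator[OF assms l] in blast)
qed

end
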